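(* Let $K$ be a Kleene algebra and $u,x,v\in K$. If $y\ge (x+uyv)^*$ has a least solution $N$ in $K$, then $N=(x+uNv)^*$ and $N$ is the least solution of $y\ge 1+x+uyv+yy$. If $y\ge 1+x+uyv+yy$ has a least solution $D$ in $K$, then $D=1+x+uDv+DD$ and $D$ is the least solution of $y\ge (x+uyv)^*$.
   Context: A Kleene algebra is an idempotent semiring $(K,+,\cdot,0,1)$ with a unary operation $^*$ such that for all $a,b$: $aa^*+1\le a^*$, $a^*a+1\le a^*$, and for all $x$, $ax+b\le x$ implies $a^*b\le x$, and $xa+b\le x$ implies $ba^*\le x$; here $a\le b$ iff $a+b=b$. *)

theory Defs
  imports Main
begin

class star_op =
  fixes star :: "'a \<Rightarrow> 'a"

class kleene_algebra = semiring_1 + order + star_op +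
  assumes add_idem: "x + x = x"
  and less_eq_def: "x \<le> y \<longleftrightarrow> x + y = y"
  and less_def: "x < y \<longleftrightarrow> x \<le> y \<and> x \<noteq> y"
  and star_unfoldl: "a * star a + 1 \<le> star a"
  and star_unfoldr: "star a * a + 1 \<le> star a"
  and star_inductl: "a * x + b \<le> x \<Longrightarrow> star a * b \<le> x"
  and star_inductr: "x * a + b \<le> x \<Longrightarrow> b * star a \<le> x"

definition (in order) least_solution :: "('a \<Rightarrow> 'a) \<Rightarrow> 'a \<Rightarrow> bool" where
  "least_solution f N \<longleftrightarrow> f N \<le> N \<and> (\<forall>y. f y \<le> y \<longrightarrow> N \<le> y)"

end

theory Submission
  imports Defs
begin

text \<open>The star \<open>z\<^sup>*\<close> is the least solution of \<open>y \<ge> 1 + z + y y\<close>. Hence, for fixed \<open>y\<close>,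
  \<open>g y \<le> y\<close> implies \<open>f y \<le> y\<close>, and \<open>f y \<le> y\<close> implies \<open>g (f y) \<le> f y\<close>, where
  \<open>f y = (x + u y v)\<^sup>*\<close> and \<open>g y = 1 + x + u y v + y y\<close>. These two facts alone show that \<open>f\<close>
  and \<open>g\<close> have the same least solutions; a least solution of a monotone map is a fixpoint.\<close>

lemma least_solution_fixpoint:
  fixes f :: "'a::order \<Rightarrow> 'a"
  assumes "mono f" and "least_solution f N"
  shows "f N = N"
proof -
  have "f N \<le> N" using assms(2) by (simp add: least_solution_def)
  moreover have "N \<le> f N"
    using assms(2) monoD[OF assms(1) \<open>f N \<le> N\<close>] by (simp add: least_solution_def)
  ultimately show ?thesis by simp
qed

lemma least_solution_iff:
  fixes f g :: "'a::order \<Rightarrow> 'a"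
  assumes "mono f"
    and g_imp_f: "\<And>y. g y \<le> y \<Longrightarrow> f y \<le> y"
    and f_imp_g: "\<And>y. f y \<le> y \<Longrightarrow> g (f y) \<le> f y"
  shows "least_solution f N \<longleftrightarrow> least_solution g N"
proof
  assume N: "least_solution f N"
  with \<open>mono f\<close> have "f N = N" by (rule least_solution_fixpoint)
  then have "g N \<le> N" using f_imp_g[of N] by simp
  with N g_imp_f show "least_solution g N" by (simp add: least_solution_def)
next
  assume N: "least_solution g N"
  have "N \<le> y" if "f y \<le> y" for y
    using N f_imp_g[OF that] that by (auto simp: least_solution_def intro: order_trans)
  with N g_imp_f show "least_solution f N" by (simp add: least_solution_def)
qed

context kleene_algebra
begin

sublocale join: semilattice_sup "(+)" "(\<le>)" "(<)"
proof
  fix x y z :: 'a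
  show "x \<le> x + y" by (simp add: less_eq_def add_idem flip: add.assoc)
  show "y \<le> x + y" by (simp add: less_eq_def add_idem add.left_commute)
  assume "y \<le> x" and "z \<le> x"
  then show "y + z \<le> x" by (simp add: less_eq_def add.assoc)
qed

lemma mult_isol: "x \<le> y \<Longrightarrow> z * x \<le> z * y"
  by (metis distrib_left less_eq_def)

lemma mult_isor: "x \<le> y \<Longrightarrow> x * z \<le> y * z"
  by (metis distrib_right less_eq_def)

lemma mult_iso: "w \<le> x \<Longrightarrow> y \<le> z \<Longrightarrow> w * y \<le> x * z"
  by (meson mult_isol mult_isor order_trans)

lemma star_iso: "x \<le> y \<Longrightarrow> star x \<le> star y"
proof -
  assume "x \<le> y"
  then have "x * star y + 1 \<le> y * star y + 1" by (intro join.sup_mono mult_isor order_refl)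
  also have "\<dots> \<le> star y" by (rule star_unfoldl)
  finally show ?thesis using star_inductl[of x "star y" 1] by simp
qed

lemma star_ref: "1 \<le> star x"
  using star_unfoldl[of x] by simp

lemma star_ext: "x \<le> star x"
proof -
  have "x \<le> x * star x" using mult_isol[OF star_ref, of x] by simp
  also have "\<dots> \<le> star x" using star_unfoldl[of x] by simp
  finally show ?thesis .
qed

lemma star_trans: "star x * star x \<le> star x"
  using star_unfoldl[of x] by (intro star_inductl) simp

lemma star_least_solution: "least_solution (\<lambda>y. 1 + z + y * y) (star z)"
  unfolding least_solution_def
proof (intro conjI allI impI)
  show "1 + z + star z * star z \<le> star z"
    using star_ref star_ext star_trans by simp
  fix y
  assume "1 + z + y * y \<le> y"
  then have "z * y + 1 \<le> y"
    using mult_isor[of z y y] by (simp add: order_trans)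
  then show "star z \<le> y"
    using star_inductl[of z y 1] by simp
qed

end

theorem proposition5:
  fixes u x v N D :: "'a::kleene_algebra"
  shows "(least_solution (\<lambda>y. star (x + u * y * v)) N \<longrightarrow>
            N = star (x + u * N * v) \<and>
            least_solution (\<lambda>y. 1 + x + u * y * v + y * y) N)
       \<and> (least_solution (\<lambda>y. 1 + x + u * y * v + y * y) D \<longrightarrow>
            D = 1 + x + u * D * v + D * D \<and>
            least_solution (\<lambda>y. star (x + u * y * v)) D)"
proof -
  define f where "f = (\<lambda>y. star (x + u * y * v))"
  define g where "g = (\<lambda>y. 1 + x + u * y * v + y * y)"
  have "mono f" "mono g"
    unfolding f_def g_def by (intro monoI star_iso join.sup_mono mult_iso order_refl; assumption)+
  have f_least: "least_solution (\<lambda>w. 1 + (x + u * y * v) + w * w) (f y)" for y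
    unfolding f_def by (rule star_least_solution)
  have g_imp_f: "f y \<le> y" if "g y \<le> y" for y
    using f_least[of y] that by (simp add: least_solution_def g_def add.assoc)
  have f_imp_g: "g (f y) \<le> f y" if "f y \<le> y" for y
  proof -
    have "g (f y) \<le> 1 + x + u * y * v + f y * f y"
      unfolding g_def using that by (intro join.sup_mono mult_iso order_refl)
    also have "\<dots> = 1 + (x + u * y * v) + f y * f y" by (simp add: add.assoc)
    also have "\<dots> \<le> f y" using f_least[of y] by (simp add: least_solution_def)
    finally show ?thesis .
  qed
  have same: "least_solution f y \<longleftrightarrow> least_solution g y" for y
    using \<open>mono f\<close> g_imp_f f_imp_g by (rule least_solution_iff)
  have "least_solution f N \<longrightarrow> N = f N \<and> least_solution g N"
    using same least_solution_fixpoint[OF \<open>mono f\<close>, of N] by auto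
  moreover have "least_solution g D \<longrightarrow> D = g D \<and> least_solution f D"
    using same least_solution_fixpoint[OF \<open>mono g\<close>, of D] by auto
  ultimately show ?thesis unfolding f_def g_def by simp
qed

end
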